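(* Assume $\phi$ is $\alpha$-Lipschitz for some $0<\alpha<\infty$, $h$ is locally integrable and locally bounded, and $\alpha\int_0^T|h(t)|dt<1$. Then $$\limsup_{K\to\infty}\limsup_{\epsilon\to0}\epsilon\log\mathbb{P}(Z^\epsilon_T\ge K)=-\infty.$$
   Context: Let $\phi:\mathbb{R}\to[0,\infty)$ and $h:[0,\infty)\to\mathbb{R}$, $T>0$ fixed. For $\epsilon>0$, let $N^\epsilon$ be the simple point process on $[0,\infty)$ with empty past, $N^\epsilon_t$ the number of points in $(0,t]$, defined as the unique strong solution of $N^\epsilon_t=\int_0^t\int_0^\infty \mathbf{1}\{z\le \frac1\epsilon\phi(\int_0^{s-}\epsilon h(s-u)dN^\epsilon_u)\}\pi(dz\,ds)$, where $\pi$ is a Poisson random measure on $[0,\infty)^2$ with intensity $dz\,ds$. Set $Z^\epsilon_t:=\epsilon N^\epsilon_t$. *)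

theory Defs
  imports "HOL-Probability.Probability"
begin

text \<open>Poisson random measure on the quadrant [0,oo)^2 with intensity Lebesgue measure
  dz ds, realised as a random (simple) point set.  For a Borel set A of finite
  Lebesgue measure, pi(A) = card (P w \<inter> A).\<close>

definition poisson_random_measure ::
  "'a measure \<Rightarrow> ('a \<Rightarrow> (real \<times> real) set) \<Rightarrow> bool" where
  "poisson_random_measure M P \<longleftrightarrow>
     prob_space M \<and>
     (\<forall>w \<in> space M. P w \<subseteq> {0..} \<times> {0..}) \<and>
     (\<forall>A. A \<in> sets lborel \<and> A \<subseteq> {0..} \<times> {0..} \<and> emeasure lborel A < \<infinity> \<longrightarrow>
        (\<lambda>w. card (P w \<inter> A)) \<in> measurable M (count_space UNIV) \<and>
        (AE w in M. finite (P w \<inter> A)) \<and>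
        (\<forall>k::nat. measure M {w \<in> space M. card (P w \<inter> A) = k}
            = measure lborel A ^ k / fact k * exp (- measure lborel A))) \<and>
     (\<forall>(n::nat) (A :: nat \<Rightarrow> (real \<times> real) set).
        (\<forall>i<n. A i \<in> sets lborel \<and> A i \<subseteq> {0..} \<times> {0..} \<and> emeasure lborel (A i) < \<infinity>) \<and>
        disjoint_family_on A {..<n} \<longrightarrow>
        prob_space.indep_vars M (\<lambda>i. count_space UNIV) (\<lambda>i w. card (P w \<inter> A i)) {..<n})"

text \<open>The past integral  int_0^{s-} g(u) dN_u  of a counting path N (N t = number of
  points in (0,t], N t = 0 for t \<le> 0), as Lebesgue-Stieltjes integral.\<close>

definition past_integral :: "(real \<Rightarrow> nat) \<Rightarrow> (real \<Rightarrow> real) \<Rightarrow> real \<Rightarrow> real" where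
  "past_integral N g s = (LINT u:{0<..<s}|interval_measure (\<lambda>u. real (N u)). g u)"

definition accepted :: "(real \<Rightarrow> real) \<Rightarrow> (real \<Rightarrow> real) \<Rightarrow> real \<Rightarrow>
    (real \<times> real) set \<Rightarrow> (real \<Rightarrow> nat) \<Rightarrow> real \<Rightarrow> (real \<times> real) set" where
  "accepted \<phi> h \<epsilon> Pw N t =
     {(s, z) \<in> Pw. 0 < s \<and> s \<le> t \<and>
        z \<le> (1 / \<epsilon>) * \<phi> (past_integral N (\<lambda>u. \<epsilon> * h (s - u)) s)}"

text \<open>N is a (strong) solution of
  N_t = int_0^t int_0^oo 1{z \<le> phi(int_0^{s-} eps h(s-u) dN_u)/eps} pi(dz ds).
  N w t is the number of points in (0,t]; the equation is imposed for all real t,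
  which forces N w t = 0 for t \<le> 0 (empty past).\<close>

definition hawkes_solution :: "'a measure \<Rightarrow> ('a \<Rightarrow> (real \<times> real) set) \<Rightarrow>
    (real \<Rightarrow> real) \<Rightarrow> (real \<Rightarrow> real) \<Rightarrow> real \<Rightarrow> ('a \<Rightarrow> real \<Rightarrow> nat) \<Rightarrow> bool" where
  "hawkes_solution M P \<phi> h \<epsilon> N \<longleftrightarrow>
     (\<forall>t. (\<lambda>w. N w t) \<in> measurable M (count_space UNIV)) \<and>
     (AE w in M. \<forall>t. finite (accepted \<phi> h \<epsilon> (P w) (N w) t) \<and>
                     N w t = card (accepted \<phi> h \<epsilon> (P w) (N w) t))"

definition eps_log :: "real \<Rightarrow> real \<Rightarrow> ereal" where
  "eps_log \<epsilon> p = (if p = 0 then MInfty else ereal (\<epsilon> * ln p))"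

end

theory Submission
  imports Defs
begin

text \<open>Let \<open>H\<close> bound \<open>|h|\<close> on \<open>[0,T]\<close> and cut \<open>[0,T]\<close> into \<open>n\<close> cells with
  \<open>\<alpha> H T / n \<le> 1/32\<close>. At an accepted point the past integral is at most \<open>\<epsilon> H\<close> times the
  current count, so by the Lipschitz bound the marks accepted on a cell lie below
  \<open>\<phi>(0)/\<epsilon> + \<alpha> H\<close> times the count at the end of the cell. If \<open>\<epsilon> N\<^sub>T\<close> is large, the count
  crosses the doubling levels \<open>(2\<^sup>k - 1) Q/\<epsilon>\<close> on some cell \<open>k\<close> by an increment
  \<open>j > 2\<^sup>k Q/\<epsilon>\<close>, and these \<open>j\<close> points lie in a box of area at most \<open>j/8\<close>, which the
  Poisson measure fills with probability at most \<open>exp (-j)\<close>. Summing over \<open>k\<close> and \<open>j\<close> gives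
  \<open>P(Z\<^sub>T \<ge> K) \<le> C exp (-Q/\<epsilon>)\<close> for all large \<open>K\<close>, with \<open>C\<close> independent of \<open>\<epsilon>\<close> and \<open>Q\<close>.\<close>

lemma accepted_restrict:
  assumes "t' \<le> t"
  shows "accepted \<phi> h \<epsilon> Pw F t' = {p \<in> accepted \<phi> h \<epsilon> Pw F t. fst p \<le> t'}"
  using assms unfolding accepted_def by auto

lemma accepted_mono:
  "t' \<le> t \<Longrightarrow> accepted \<phi> h \<epsilon> Pw F t' \<subseteq> accepted \<phi> h \<epsilon> Pw F t"
  using accepted_restrict by blast

lemma accepted_nonpos: "t \<le> 0 \<Longrightarrow> accepted \<phi> h \<epsilon> Pw F t = {}"
  unfolding accepted_def by auto

lemma abs_set_integral_le:
  fixes g :: "real \<Rightarrow> real"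
  assumes S: "S \<in> sets M" "emeasure M S < \<infinity>" and "0 \<le> B"
    and bound: "\<And>u. u \<in> S \<Longrightarrow> \<bar>g u\<bar> \<le> B"
  shows "\<bar>set_lebesgue_integral M S g\<bar> \<le> B * measure M S"
proof (cases "integrable M (\<lambda>x. indicator S x *\<^sub>R g x)")
  case True
  have "integrable M (\<lambda>x. indicator S x *\<^sub>R B)"
    using S by (intro integrableI_bounded_set_indicator) auto
  then have "norm (integral\<^sup>L M (\<lambda>x. indicator S x *\<^sub>R g x))
      \<le> integral\<^sup>L M (\<lambda>x. indicator S x *\<^sub>R B)"
    using bound by (intro Bochner_Integration.integral_norm_bound_integral[OF True]) (auto simp: indicator_def)
  also have "\<dots> = B * measure M S"
    using sets.Int_space_eq2[OF S(1)] by (simp add: mult.commute)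
  finally show ?thesis by (simp add: set_lebesgue_integral_def)
next
  case False
  then show ?thesis using \<open>0 \<le> B\<close> by (simp add: set_lebesgue_integral_def not_integrable_integral_eq)
qed

lemma abs_past_integral_le:
  fixes F :: "real \<Rightarrow> nat"
  assumes mono: "mono F" and right_cont: "\<And>a. continuous (at_right a) (\<lambda>u. real (F u))"
    and "F 0 = 0" "0 < s" "0 \<le> B"
    and bound: "\<And>u. u \<in> {0<..<s} \<Longrightarrow> \<bar>g u\<bar> \<le> B"
  shows "\<bar>past_integral F g s\<bar> \<le> B * real (F s)"
proof -
  let ?\<mu> = "interval_measure (\<lambda>u. real (F u))"
  have Ioc: "emeasure ?\<mu> {0<..s} = real (F s)"
    using assms emeasure_interval_measure_Ioc[of 0 s "\<lambda>u. real (F u)"]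
    by (auto simp: mono_def)
  have Ioo_le: "emeasure ?\<mu> {0<..<s} \<le> emeasure ?\<mu> {0<..s}"
    by (intro emeasure_mono) auto
  then have "emeasure ?\<mu> {0<..<s} < \<infinity>"
    using Ioc by (auto simp: less_top[symmetric] top_unique)
  then have "\<bar>past_integral F g s\<bar> \<le> B * measure ?\<mu> {0<..<s}"
    unfolding past_integral_def using assms by (intro abs_set_integral_le) auto
  also have "measure ?\<mu> {0<..<s} \<le> real (F s)"
    using Ioo_le Ioc enn2real_mono[OF Ioo_le] by (simp add: measure_def)
  finally show ?thesis using \<open>0 \<le> B\<close> by (simp add: mult_left_mono order_trans)
qed

locale thinning_path =
  fixes \<phi> h :: "real \<Rightarrow> real" and \<epsilon> :: real and Pw :: "(real \<times> real) set"
    and F :: "real \<Rightarrow> nat"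
  assumes finite_accepted: "\<And>t. finite (accepted \<phi> h \<epsilon> Pw F t)"
    and count_eq: "\<And>t. F t = card (accepted \<phi> h \<epsilon> Pw F t)"
begin

abbreviation acc :: "real \<Rightarrow> (real \<times> real) set" where
  "acc \<equiv> accepted \<phi> h \<epsilon> Pw F"

lemma count_nonpos: "t \<le> 0 \<Longrightarrow> F t = 0"
  by (simp add: count_eq accepted_nonpos)

lemma count_mono: "mono F"
  by (rule monoI) (simp add: count_eq card_mono[OF finite_accepted accepted_mono])

lemma count_diff: "s \<le> t \<Longrightarrow> F t - F s = card (acc t - acc s)"
  by (simp add: count_eq card_Diff_subset[OF finite_accepted accepted_mono])

lemma count_right_continuous: "continuous (at_right a) (\<lambda>u. real (F u))"
proof -
  let ?S = "fst ` acc (a + 1)"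
  have "\<forall>\<^sub>F t in at_right a. \<forall>s\<in>?S. a < s \<longrightarrow> t < s"
    using finite_accepted by (intro eventually_ball_finite) (auto intro: eventually_at_rightI)
  moreover have "\<forall>\<^sub>F t in at_right a. t < a + 1"
    by (intro eventually_at_rightI[of a "a + 1"]) auto
  ultimately have "\<forall>\<^sub>F t in at_right a. acc t = acc a"
    using eventually_at_right_less[of a]
  proof eventually_elim
    case (elim t)
    have "fst p \<le> a" if "p \<in> acc t" for p
    proof -
      have "p \<in> acc (a + 1)" "fst p \<le> t"
        using that accepted_mono[of t "a + 1"] elim by (auto simp: accepted_def)
      then show ?thesis using elim(1) by fastforce
    qed
    then show ?case using accepted_restrict[of a t] elim(3) by auto
  qed
  then have "\<forall>\<^sub>F t in at_right a. real (F t) = real (F a)"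
    by eventually_elim (simp add: count_eq)
  then show ?thesis
    unfolding continuous_within by (rule tendsto_eventually)
qed

lemma accepted_mark_le:
  assumes p: "(s, z) \<in> acc t" and "t \<le> T" "0 < \<epsilon>"
    and lip: "\<alpha>-lipschitz_on UNIV \<phi>" and h_bound: "\<And>x. x \<in> {0..T} \<Longrightarrow> \<bar>h x\<bar> \<le> H"
    and "0 \<le> H"
  shows "z \<le> \<phi> 0 / \<epsilon> + \<alpha> * H * real (F t)"
proof -
  define I where "I = past_integral F (\<lambda>u. \<epsilon> * h (s - u)) s"
  have s: "0 < s" "s \<le> t" and z: "z \<le> (1 / \<epsilon>) * \<phi> I"
    using p unfolding accepted_def I_def by auto
  have "\<bar>I\<bar> \<le> \<epsilon> * H * real (F s)"
    unfolding I_def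
  proof (rule abs_past_integral_le[OF count_mono count_right_continuous count_nonpos s(1)])
    fix u assume "u \<in> {0<..<s}"
    then have "\<bar>h (s - u)\<bar> \<le> H" using s \<open>t \<le> T\<close> by (intro h_bound) auto
    then show "\<bar>\<epsilon> * h (s - u)\<bar> \<le> \<epsilon> * H" using \<open>0 < \<epsilon>\<close> by (simp add: abs_mult)
  qed (use \<open>0 < \<epsilon>\<close> \<open>0 \<le> H\<close> in auto)
  also have "\<dots> \<le> \<epsilon> * H * real (F t)"
    using monoD[OF count_mono s(2)] \<open>0 < \<epsilon>\<close> \<open>0 \<le> H\<close> by (intro mult_left_mono) auto
  finally have I_le: "\<bar>I\<bar> \<le> \<epsilon> * H * real (F t)" .
  have "\<phi> I \<le> \<phi> 0 + \<alpha> * \<bar>I\<bar>"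
    using lipschitz_onD[OF lip, of I 0] by (simp add: dist_real_def)
  also have "\<dots> \<le> \<phi> 0 + \<alpha> * (\<epsilon> * H * real (F t))"
    using I_le lipschitz_on_nonneg[OF lip] by (intro add_left_mono mult_left_mono)
  finally show ?thesis
    using z \<open>0 < \<epsilon>\<close> by (simp add: field_simps)
qed

end

lemma exp_2_le_8: "exp (2::real) \<le> 8"
proof -
  have "exp (2::real) = exp 1 * exp 1" by (simp flip: exp_add)
  also have "\<dots> \<le> 2.72 * 2.72"
    using e_less_272 by (intro mult_mono) auto
  finally show ?thesis by simp
qed

text \<open>Chernoff bound: the terms are compared with those of the series of \<open>exp (e\<^sup>2 \<mu>)\<close>.\<close>

lemma poisson_tail_series_le:
  fixes \<mu> :: real
  assumes "0 \<le> \<mu>" "8 * \<mu> \<le> real j"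
  shows "summable (\<lambda>i. \<mu> ^ (i + j) / fact (i + j))"
    and "(\<Sum>i. \<mu> ^ (i + j) / fact (i + j)) \<le> exp (- real j)"
proof -
  define x where "x = exp 2 * \<mu>"
  have "0 \<le> x" using assms by (simp add: x_def)
  have x_sums: "(\<lambda>i. x ^ (i + j) / fact (i + j)) sums (exp x - (\<Sum>i<j. x ^ i / fact i))"
    using exp_converges[of x] by (subst sums_iff_shift) (simp add: divide_inverse mult.commute)
  have term_le: "\<mu> ^ (i + j) / fact (i + j) \<le> exp (- 2 * real j) * (x ^ (i + j) / fact (i + j))" for i
  proof -
    have "\<mu> = exp (- 2) * x"
      by (simp add: x_def mult.assoc[symmetric] flip: exp_add)
    then have "\<mu> ^ (i + j) / fact (i + j) = exp (- 2 * real (i + j)) * (x ^ (i + j) / fact (i + j))"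
      by (simp add: power_mult_distrib exp_of_nat_mult[symmetric] mult.commute)
    also have "\<dots> \<le> exp (- 2 * real j) * (x ^ (i + j) / fact (i + j))"
      using \<open>0 \<le> x\<close> by (intro mult_right_mono) auto
    finally show ?thesis .
  qed
  have bound_sums: "(\<lambda>i. exp (- 2 * real j) * (x ^ (i + j) / fact (i + j)))
      sums (exp (- 2 * real j) * (exp x - (\<Sum>i<j. x ^ i / fact i)))"
    by (rule sums_mult[OF x_sums])
  show summable: "summable (\<lambda>i. \<mu> ^ (i + j) / fact (i + j))"
  proof (rule summable_comparison_test'[OF sums_summable[OF bound_sums]])
    show "norm (\<mu> ^ (i + j) / fact (i + j)) \<le> exp (- 2 * real j) * (x ^ (i + j) / fact (i + j))" for i
      using term_le[of i] assms(1) by simp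
  qed
  have "(\<Sum>i. \<mu> ^ (i + j) / fact (i + j)) \<le> exp (- 2 * real j) * (exp x - (\<Sum>i<j. x ^ i / fact i))"
    by (rule sums_le[OF term_le summable_sums[OF summable] bound_sums])
  also have "\<dots> \<le> exp (- 2 * real j) * exp x"
    using \<open>0 \<le> x\<close> by (intro mult_left_mono) (auto intro!: sum_nonneg)
  also have "\<dots> \<le> exp (- real j)"
  proof -
    have "x \<le> 8 * \<mu>" unfolding x_def using exp_2_le_8 assms(1) by (intro mult_right_mono)
    then show ?thesis using assms(2) by (simp flip: exp_add)
  qed
  finally show "(\<Sum>i. \<mu> ^ (i + j) / fact (i + j)) \<le> exp (- real j)" .
qed

lemma poisson_random_measure_tail:
  assumes PRM: "poisson_random_measure M P"
    and A: "A \<in> sets lborel" "A \<subseteq> {0..} \<times> {0..}" "emeasure lborel A < \<infinity>"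
    and small: "8 * measure lborel A \<le> real j"
  shows "measure M {w \<in> space M. j \<le> card (P w \<inter> A)} \<le> exp (- real j)"
proof -
  interpret prob_space M using PRM by (simp add: poisson_random_measure_def)
  define \<mu> where "\<mu> = measure lborel A"
  have meas: "(\<lambda>w. card (P w \<inter> A)) \<in> measurable M (count_space UNIV)"
    and law: "\<And>k. measure M {w \<in> space M. card (P w \<inter> A) = k} = \<mu> ^ k / fact k * exp (- \<mu>)"
    using PRM A unfolding poisson_random_measure_def \<mu>_def by blast+
  define E where "E i = {w \<in> space M. card (P w \<inter> A) = i + j}" for i
  have E_sets: "E i \<in> sets M" for i
    using measurable_sets[OF meas, of "{i + j}"] by (simp add: E_def vimage_def Int_def conj_commute)
  have "(\<lambda>i. measure M (E i)) sums measure M (\<Union>i. E i)"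
    using E_sets by (intro measure_UNION)
      (auto simp: emeasure_eq_measure disjoint_family_on_def E_def)
  moreover have "(\<Union>i. E i) = {w \<in> space M. j \<le> card (P w \<inter> A)}"
    unfolding E_def by (auto dest: le_Suc_ex simp: add.commute)
  ultimately have "(\<lambda>i. measure M (E i)) sums measure M {w \<in> space M. j \<le> card (P w \<inter> A)}"
    by simp
  moreover have "measure M (E i) \<le> \<mu> ^ (i + j) / fact (i + j)" for i
    unfolding E_def law by (intro mult_left_le) (auto simp: \<mu>_def)
  moreover have "summable (\<lambda>i. \<mu> ^ (i + j) / fact (i + j))"
    using poisson_tail_series_le(1) small by (simp add: \<mu>_def)
  ultimately have "measure M {w \<in> space M. j \<le> card (P w \<inter> A)} \<le> (\<Sum>i. \<mu> ^ (i + j) / fact (i + j))"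
    by (intro sums_le[OF _ _ summable_sums])
  also have "\<dots> \<le> exp (- real j)"
    using poisson_tail_series_le(2) small by (simp add: \<mu>_def)
  finally show ?thesis .
qed

lemma Ioc_times_Icc_lborel:
  fixes a b c :: real
  assumes "0 \<le> a" "a \<le> b" "0 \<le> c"
  shows "{a<..b} \<times> {0..c} \<in> sets lborel" "{a<..b} \<times> {0..c} \<subseteq> {0..} \<times> {0..}"
    "emeasure lborel ({a<..b} \<times> {0..c}) < \<infinity>"
    "measure lborel ({a<..b} \<times> {0..c}) = (b - a) * c"
proof -
  show "{a<..b} \<times> {0..c} \<in> sets lborel"
    by (subst lborel_prod[symmetric]) (intro pair_measureI; simp)
  show "{a<..b} \<times> {0..c} \<subseteq> {0..} \<times> {0..}" using assms by auto
  have "emeasure lborel ({a<..b} \<times> {0..c}) = emeasure lborel {a<..b} * emeasure lborel {0..c}"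
    by (simp flip: lborel_prod add: lborel.emeasure_pair_measure_Times)
  also have "\<dots> = ennreal ((b - a) * c)" using assms by (simp add: ennreal_mult)
  finally have "emeasure lborel ({a<..b} \<times> {0..c}) = ennreal ((b - a) * c)" .
  then show "emeasure lborel ({a<..b} \<times> {0..c}) < \<infinity>"
    and "measure lborel ({a<..b} \<times> {0..c}) = (b - a) * c"
    using assms by (simp_all add: measure_def)
qed

lemma exists_upcrossing:
  fixes f g :: "nat \<Rightarrow> 'a::linorder"
  assumes "f 0 \<le> g 0" "g n < f n"
  shows "\<exists>k<n. f k \<le> g k \<and> g (Suc k) < f (Suc k)"
  using assms
proof (induction n)
  case (Suc n)
  then show ?case
    by (cases "f n \<le> g n") (auto simp: not_le intro: less_SucI)
qed simp

locale doubling_grid =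
  fixes \<phi> h :: "real \<Rightarrow> real" and \<alpha> H T Q \<epsilon> :: real and n :: nat
  assumes lip: "\<alpha>-lipschitz_on UNIV \<phi>" and phi0_nonneg: "0 \<le> \<phi> 0"
    and h_bound: "\<And>x. x \<in> {0..T} \<Longrightarrow> \<bar>h x\<bar> \<le> H" and H_nonneg: "0 \<le> H"
    and T_pos: "0 < T" and n_pos: "0 < n"
    and fine_mesh: "\<alpha> * H * (T / n) \<le> 1/32"
    and Q_large: "16 * (T / n) * \<phi> 0 \<le> Q" and Q_pos: "0 < Q" and eps_pos: "0 < \<epsilon>"
begin

definition node :: "nat \<Rightarrow> real" where
  "node k = real k * (T / n)"

definition level :: "nat \<Rightarrow> real" where
  "level k = (2 ^ k - 1) * Q / \<epsilon>"

text \<open>If the count is at most \<open>level k\<close> at \<open>node k\<close> and grows by \<open>j\<close> on the next cell, then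
  every point accepted on that cell lies in \<open>box k j\<close>.\<close>

definition box :: "nat \<Rightarrow> nat \<Rightarrow> (real \<times> real) set" where
  "box k j = {node k<..node (Suc k)} \<times> {0 .. \<phi> 0 / \<epsilon> + \<alpha> * H * (level k + real j)}"

definition overfull :: "(real \<times> real) set \<Rightarrow> bool" where
  "overfull Pw \<longleftrightarrow> (\<exists>k<n. \<exists>j. level (Suc k) - level k < real j \<and> j \<le> card (Pw \<inter> box k j))"

lemma alpha_nonneg: "0 \<le> \<alpha>"
  using lip by (rule lipschitz_on_nonneg)

lemma node_Suc: "node (Suc k) = node k + T / n"
  by (simp add: node_def ring_distribs add_divide_distrib)

lemma node_nonneg: "0 \<le> node k"
  using T_pos by (simp add: node_def)

lemma node_le_T: "k \<le> n \<Longrightarrow> node k \<le> T"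
  using T_pos n_pos by (simp add: node_def field_simps)

lemma node_n: "node n = T"
  using n_pos by (simp add: node_def)

lemma level_nonneg: "0 \<le> level k"
  using Q_pos eps_pos by (simp add: level_def)

lemma level_gap: "level (Suc k) - level k = 2 ^ k * Q / \<epsilon>"
  by (simp add: level_def diff_divide_distrib[symmetric] algebra_simps)

lemma Q_div_eps_le_gap: "Q / \<epsilon> \<le> level (Suc k) - level k"
  using Q_pos eps_pos by (simp add: level_gap divide_right_mono)

lemma level_le_gap: "level k \<le> level (Suc k) - level k"
  using Q_pos eps_pos by (simp add: level_gap level_def divide_right_mono mult_right_mono)

lemma box_lborel:
  "box k j \<in> sets lborel" "box k j \<subseteq> {0..} \<times> {0..}" "emeasure lborel (box k j) < \<infinity>"
  "measure lborel (box k j) = T / n * (\<phi> 0 / \<epsilon> + \<alpha> * H * (level k + real j))"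
  using Ioc_times_Icc_lborel[of "node k" "node (Suc k)" "\<phi> 0 / \<epsilon> + \<alpha> * H * (level k + real j)"]
    node_nonneg[of k] T_pos phi0_nonneg eps_pos alpha_nonneg H_nonneg level_nonneg[of k]
  by (simp_all add: box_def node_Suc)

lemma measure_box_le:
  assumes gap: "level (Suc k) - level k < real j"
  shows "8 * measure lborel (box k j) \<le> real j"
proof -
  have Q_le: "Q / \<epsilon> \<le> real j" and level_le: "level k \<le> real j"
    using gap Q_div_eps_le_gap[of k] level_le_gap[of k] by linarith+
  have "T / n * (\<phi> 0 / \<epsilon>) \<le> Q / \<epsilon> / 16"
    using Q_large eps_pos by (simp add: field_simps)
  also have "\<dots> \<le> real j / 16"
    using Q_le by simp
  moreover have "\<alpha> * H * (T / n) * level k \<le> real j / 32"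
    using mult_mono[OF fine_mesh level_le] level_nonneg by simp
  moreover have "\<alpha> * H * (T / n) * real j \<le> real j / 32"
    using mult_right_mono[OF fine_mesh, of "real j"] by simp
  moreover have "measure lborel (box k j)
      = T / n * (\<phi> 0 / \<epsilon>) + \<alpha> * H * (T / n) * level k + \<alpha> * H * (T / n) * real j"
    unfolding box_lborel(4) by (simp add: ring_distribs mult_ac)
  ultimately show ?thesis
    by linarith
qed

lemma prob_box_overfull:
  assumes PRM: "poisson_random_measure M P" and gap: "level (Suc k) - level k < real j"
  shows "measure M {w \<in> space M. j \<le> card (P w \<inter> box k j)}
           \<le> exp (- Q / (2 * \<epsilon>)) * exp (- 1/2) ^ j"
proof -
  have "measure M {w \<in> space M. j \<le> card (P w \<inter> box k j)} \<le> exp (- real j)"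
    using poisson_random_measure_tail[OF PRM box_lborel(1-3) measure_box_le[OF gap]] .
  also have "\<dots> \<le> exp (- Q / (2 * \<epsilon>) + real j * (- 1/2))"
  proof -
    have "Q / \<epsilon> \<le> real j"
      using gap Q_div_eps_le_gap[of k] by linarith
    then show ?thesis using eps_pos by (simp add: field_simps)
  qed
  finally show ?thesis by (simp only: exp_add exp_of_nat_mult)
qed

lemma prob_overfull:
  assumes PRM: "poisson_random_measure M P"
  shows "measure M {w \<in> space M. overfull (P w)} \<le> n / (1 - exp (- 1/2)) * exp (- Q / (2 * \<epsilon>))"
    and "{w \<in> space M. overfull (P w)} \<in> sets M"
proof -
  interpret prob_space M using PRM by (simp add: poisson_random_measure_def)
  define Bad where "Bad k j = (if level (Suc k) - level k < real j
    then {w \<in> space M. j \<le> card (P w \<inter> box k j)} else {})" for k j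
  define C where "C = 1 / (1 - exp (- 1/2 :: real))"
  have overfull_eq: "{w \<in> space M. overfull (P w)} = (\<Union>k<n. \<Union>j. Bad k j)"
    by (auto simp: overfull_def Bad_def split: if_splits)
  have Bad_sets: "Bad k j \<in> sets M" for k j
  proof -
    have "(\<lambda>w. card (P w \<inter> box k j)) \<in> measurable M (count_space UNIV)"
      using PRM box_lborel[of k j] unfolding poisson_random_measure_def by blast
    from measurable_sets[OF this, of "{j..}"] show ?thesis
      by (simp add: Bad_def vimage_def Int_def conj_commute)
  qed
  then show "{w \<in> space M. overfull (P w)} \<in> sets M"
    unfolding overfull_eq by auto
  have Bad_le: "measure M (Bad k j) \<le> exp (- Q / (2 * \<epsilon>)) * exp (- 1/2) ^ j" for k j
    using prob_box_overfull[OF PRM] by (simp add: Bad_def)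
  have geometric: "(\<lambda>j. exp (- Q / (2 * \<epsilon>)) * exp (- 1/2 :: real) ^ j) sums (exp (- Q / (2 * \<epsilon>)) * C)"
    unfolding C_def by (intro sums_mult geometric_sums) simp
  have Bad_summable: "summable (\<lambda>j. measure M (Bad k j))" for k
    using Bad_le by (intro summable_comparison_test'[OF sums_summable[OF geometric]]) simp
  have row_le: "measure M (\<Union>j. Bad k j) \<le> exp (- Q / (2 * \<epsilon>)) * C" for k
  proof -
    have "measure M (\<Union>j. Bad k j) \<le> (\<Sum>j. measure M (Bad k j))"
      using Bad_sets Bad_summable by (intro finite_measure_subadditive_countably) auto
    also have "\<dots> \<le> exp (- Q / (2 * \<epsilon>)) * C"
      by (rule sums_le[OF Bad_le summable_sums[OF Bad_summable] geometric])
    finally show ?thesis .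
  qed
  have "measure M (\<Union>k<n. \<Union>j. Bad k j) \<le> (\<Sum>k<n. measure M (\<Union>j. Bad k j))"
    using Bad_sets by (intro finite_measure_subadditive_finite) auto
  also have "\<dots> \<le> (\<Sum>k<n. exp (- Q / (2 * \<epsilon>)) * C)"
    by (intro sum_mono row_le)
  finally show "measure M {w \<in> space M. overfull (P w)} \<le> n / (1 - exp (- 1/2)) * exp (- Q / (2 * \<epsilon>))"
    by (simp add: overfull_eq C_def)
qed

lemma overfull_if_count_exceeds:
  assumes "thinning_path \<phi> h \<epsilon> Pw F" and quadrant: "Pw \<subseteq> {0..} \<times> {0..}"
    and finite_box: "\<And>k j. finite (Pw \<inter> box k j)" and exceeds: "level n < real (F T)"
  shows "overfull Pw"
proof -
  interpret thinning_path \<phi> h \<epsilon> Pw F by fact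
  have "real (F (node 0)) \<le> level 0"
    by (simp add: count_nonpos node_def level_def)
  moreover have "level n < real (F (node n))"
    using exceeds by (simp add: node_n)
  ultimately obtain k where k: "k < n" "real (F (node k)) \<le> level k"
    and crossed: "level (Suc k) < real (F (node (Suc k)))"
    using exists_upcrossing[of "\<lambda>k. real (F (node k))" level n] by auto
  define j where "j = F (node (Suc k)) - F (node k)"
  have node_le: "node k \<le> node (Suc k)"
    using T_pos by (simp add: node_Suc)
  have count_Suc: "real (F (node (Suc k))) = real (F (node k)) + real j"
    using monoD[OF count_mono node_le] by (simp add: j_def)
  have "acc (node (Suc k)) - acc (node k) \<subseteq> Pw \<inter> box k j"
  proof
    fix p assume p: "p \<in> acc (node (Suc k)) - acc (node k)"
    obtain s z where p_eq: "p = (s, z)" by fastforce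
    have acc_Suc: "(s, z) \<in> acc (node (Suc k))" using p p_eq by simp
    then have "node k < s" "s \<le> node (Suc k)" "(s, z) \<in> Pw"
      using p p_eq accepted_restrict[OF node_le, of \<phi> h \<epsilon> Pw F] by (auto simp: accepted_def)
    moreover have "z \<le> \<phi> 0 / \<epsilon> + \<alpha> * H * real (F (node (Suc k)))"
      using k(1) by (intro accepted_mark_le[OF acc_Suc node_le_T eps_pos lip h_bound H_nonneg]) auto
    then have "z \<le> \<phi> 0 / \<epsilon> + \<alpha> * H * (level k + real j)"
      using k(2) count_Suc alpha_nonneg H_nonneg by (simp add: mult_left_mono order_trans)
    ultimately show "p \<in> Pw \<inter> box k j"
      using quadrant p_eq by (auto simp: box_def)
  qed
  then have "j \<le> card (Pw \<inter> box k j)"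
    unfolding j_def count_diff[OF node_le] using finite_box by (intro card_mono)
  moreover have "level (Suc k) - level k < real j"
    using k(2) crossed count_Suc by simp
  ultimately show ?thesis
    using k(1) unfolding overfull_def by blast
qed

lemma hawkes_tail_le:
  assumes PRM: "poisson_random_measure M P" and sol: "hawkes_solution M P \<phi> h \<epsilon> Ne"
    and K: "(2 ^ n - 1) * Q < K"
  shows "measure M {w \<in> space M. K \<le> \<epsilon> * real (Ne w T)}
           \<le> n / (1 - exp (- 1/2)) * exp (- Q / (2 * \<epsilon>))"
proof -
  interpret prob_space M using PRM by (simp add: poisson_random_measure_def)
  have "AE w in M. thinning_path \<phi> h \<epsilon> (P w) (Ne w)"
    using sol unfolding hawkes_solution_def thinning_path_def by auto
  moreover have "AE w in M. \<forall>k j. finite (P w \<inter> box k j)"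
    using PRM box_lborel unfolding poisson_random_measure_def by (auto simp: AE_all_countable)
  ultimately have "AE w in M. w \<in> {w \<in> space M. K \<le> \<epsilon> * real (Ne w T)}
      \<longrightarrow> w \<in> {w \<in> space M. overfull (P w)}"
  proof eventually_elim
    case (elim w)
    show ?case
    proof safe
      assume "w \<in> space M" "K \<le> \<epsilon> * real (Ne w T)"
      then have "P w \<subseteq> {0..} \<times> {0..}"
        using PRM by (simp add: poisson_random_measure_def)
      moreover have "\<epsilon> * level n < \<epsilon> * real (Ne w T)"
        using K \<open>K \<le> \<epsilon> * real (Ne w T)\<close> eps_pos by (simp add: level_def)
      then have "level n < real (Ne w T)"
        using eps_pos by simp
      ultimately show "overfull (P w)"
        using elim by (intro overfull_if_count_exceeds) auto
    qed
  qed
  then have "measure M {w \<in> space M. K \<le> \<epsilon> * real (Ne w T)} \<le> measure M {w \<in> space M. overfull (P w)}"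
    using prob_overfull(2)[OF PRM] by (intro finite_measure_mono_AE) (auto elim: AE_mp)
  then show ?thesis
    using prob_overfull(1)[OF PRM] by linarith
qed

end

lemma Limsup_Limsup_eq_MInfty:
  fixes f :: "'a \<Rightarrow> 'b \<Rightarrow> ereal"
  assumes "\<And>L. \<forall>\<^sub>F x in F. \<forall>\<^sub>F y in G. f x y \<le> ereal L"
  shows "Limsup F (\<lambda>x. Limsup G (f x)) = -\<infinity>"
proof (rule ereal_bot)
  fix L :: real
  have "\<forall>\<^sub>F x in F. Limsup G (f x) \<le> ereal L"
    using assms[of L] by eventually_elim (rule Limsup_bounded)
  then show "Limsup F (\<lambda>x. Limsup G (f x)) \<le> ereal L"
    by (rule Limsup_bounded)
qed

lemma eps_log_le:
  assumes "0 \<le> p" "p \<le> C * exp (- Q / \<epsilon>)" "0 < C" "0 < \<epsilon>" "\<epsilon> * \<bar>ln C\<bar> \<le> 1"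
  shows "eps_log \<epsilon> p \<le> ereal (1 - Q)"
proof (cases "p = 0")
  case False
  then have "ln p \<le> ln (C * exp (- Q / \<epsilon>))"
    using assms by simp
  also have "\<dots> = ln C - Q / \<epsilon>"
    using \<open>0 < C\<close> by (simp add: ln_mult)
  finally have "\<epsilon> * ln p \<le> \<epsilon> * (ln C - Q / \<epsilon>)"
    using \<open>0 < \<epsilon>\<close> by (intro mult_left_mono) auto
  also have "\<dots> = \<epsilon> * ln C - Q"
    using \<open>0 < \<epsilon>\<close> by (simp add: right_diff_distrib)
  moreover have "\<epsilon> * ln C \<le> \<epsilon> * \<bar>ln C\<bar>"
    using \<open>0 < \<epsilon>\<close> by (intro mult_left_mono) auto
  ultimately show ?thesis
    using False assms(5) by (simp add: eps_log_def)
qed (simp add: eps_log_def)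

lemma hawkes_tail_exponential:
  fixes N :: "real \<Rightarrow> 'a \<Rightarrow> real \<Rightarrow> nat"
  assumes PRM: "poisson_random_measure M P" and T_pos: "0 < T" and phi0_nonneg: "0 \<le> \<phi> 0"
    and lip: "\<alpha>-lipschitz_on UNIV \<phi>" and h_bounded: "bounded (h ` {0..T})"
    and sol: "\<And>\<epsilon>. 0 < \<epsilon> \<Longrightarrow> hawkes_solution M P \<phi> h \<epsilon> (N \<epsilon>)"
  obtains C Q0 R where "0 < C"
    and "\<And>Q K \<epsilon>. Q0 \<le> Q \<Longrightarrow> R * Q < K \<Longrightarrow> 0 < \<epsilon> \<Longrightarrow>
           measure M {w \<in> space M. K \<le> \<epsilon> * real (N \<epsilon> w T)} \<le> C * exp (- Q / \<epsilon>)"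
proof -
  obtain H where H_nonneg: "0 \<le> H" and h_bound: "\<And>x. x \<in> {0..T} \<Longrightarrow> \<bar>h x\<bar> \<le> H"
    using h_bounded unfolding bounded_iff
    by (metis image_eqI real_norm_def abs_ge_zero order_trans)
  define n where "n = nat \<lceil>32 * \<alpha> * H * T\<rceil> + 1"
  have n_pos: "0 < n" by (simp add: n_def)
  have "32 * \<alpha> * H * T \<le> real n"
    using real_nat_ceiling_ge[of "32 * \<alpha> * H * T"] by (simp add: n_def)
  then have fine_mesh: "\<alpha> * H * (T / n) \<le> 1/32"
    using n_pos by (simp add: field_simps)
  define C where "C = n / (1 - exp (- 1/2 :: real))"
  have "0 < C" using n_pos by (simp add: C_def)
  moreover have "measure M {w \<in> space M. K \<le> \<epsilon> * real (N \<epsilon> w T)} \<le> C * exp (- Q / \<epsilon>)"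
    if "max 1 (8 * (T / n) * \<phi> 0) \<le> Q" "2 * (2 ^ n - 1) * Q < K" "0 < \<epsilon>" for Q K \<epsilon>
  proof -
    interpret doubling_grid \<phi> h \<alpha> H T "2 * Q" \<epsilon> n
      using that lip phi0_nonneg h_bound H_nonneg T_pos n_pos fine_mesh
      by unfold_locales auto
    show ?thesis
      using hawkes_tail_le[OF PRM sol[OF eps_pos]] that(2) by (simp add: C_def mult_ac)
  qed
  ultimately show thesis
    by (intro that[of C "max 1 (8 * (T / n) * \<phi> 0)" "2 * (2 ^ n - 1)"])
qed

theorem lemma2p7:
  fixes M :: "'a measure" and P :: "'a \<Rightarrow> (real \<times> real) set"
    and \<phi> :: "real \<Rightarrow> real" and h :: "real \<Rightarrow> real"
    and \<alpha> T :: real and N :: "real \<Rightarrow> 'a \<Rightarrow> real \<Rightarrow> nat"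
  assumes PRM: "poisson_random_measure M P"
    and T_pos: "0 < T"
    and phi_nonneg: "\<And>x. 0 \<le> \<phi> x"
    and alpha_pos: "0 < \<alpha>"
    and phi_lip: "\<alpha>-lipschitz_on UNIV \<phi>"
    and h_loc_int: "\<And>b. set_integrable lborel {0..b} h"
    and h_loc_bdd: "\<And>b. bounded (h ` {0..b})"
    and small: "\<alpha> * (LINT t:{0..T}|lborel. \<bar>h t\<bar>) < 1"
    and sol: "\<And>\<epsilon>. 0 < \<epsilon> \<Longrightarrow> hawkes_solution M P \<phi> h \<epsilon> (N \<epsilon>)"
  shows "Limsup at_top (\<lambda>K::real. Limsup (at_right 0)
            (\<lambda>\<epsilon>. eps_log \<epsilon> (measure M {w \<in> space M. \<epsilon> * real (N \<epsilon> w T) \<ge> K})))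
         = -\<infinity>"
proof (rule Limsup_Limsup_eq_MInfty)
  fix L :: real
  obtain C Q0 R where "0 < C" and tail: "\<And>Q K \<epsilon>. Q0 \<le> Q \<Longrightarrow> R * Q < K \<Longrightarrow> 0 < \<epsilon> \<Longrightarrow>
      measure M {w \<in> space M. K \<le> \<epsilon> * real (N \<epsilon> w T)} \<le> C * exp (- Q / \<epsilon>)"
    using hawkes_tail_exponential[OF PRM T_pos phi_nonneg phi_lip h_loc_bdd sol] by blast
  define Q where "Q = max Q0 (1 - L)"
  have "\<forall>\<^sub>F \<epsilon> in at_right 0. 0 < \<epsilon> \<and> \<epsilon> * \<bar>ln C\<bar> \<le> 1"
  proof (rule eventually_at_rightI[of 0 "1 / (\<bar>ln C\<bar> + 1)"])
    fix \<epsilon> :: real assume "\<epsilon> \<in> {0<..<1 / (\<bar>ln C\<bar> + 1)}"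
    then show "0 < \<epsilon> \<and> \<epsilon> * \<bar>ln C\<bar> \<le> 1"
      by (auto simp: field_simps intro: order_trans[OF mult_left_mono[of "\<bar>ln C\<bar>" "\<bar>ln C\<bar> + 1"]])
  qed simp
  then show "\<forall>\<^sub>F K in at_top. \<forall>\<^sub>F \<epsilon> in at_right 0.
      eps_log \<epsilon> (measure M {w \<in> space M. \<epsilon> * real (N \<epsilon> w T) \<ge> K}) \<le> ereal L"
    using eventually_gt_at_top[of "R * Q"]
    by (elim eventually_mono, intro order_trans[OF eps_log_le[OF _ tail \<open>0 < C\<close>]])
      (auto simp: Q_def)
qed

end
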